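(* For every $k \geq 4$, there exists an even polynomial $p \in \Delta_k$ such that $x_1^2x_2^2 \cdots x_k^2$ divides $p$ and $(1,0,\ldots,0)$ is a bad point for $p$.
   Context: $P_k$ is the set of homogeneous polynomials in $\mathbb{R}[x_1,\ldots,x_k]$ taking only non-negative values on $\mathbb{R}^k$; $\Sigma_k$ is the set of homogeneous polynomials in $k$ variables that are sums of squares of polynomials with real coefficients; $\Delta_k=P_k\setminus\Sigma_k$. A polynomial is even if every variable appears with even exponent in every monomial. A point $x_0\in\mathbb{R}^k$ is a bad point for $p\in P_k$ if $q(x_0)=0$ for every polynomial $q\in\mathbb{R}[x_1,\ldots,x_k]$ such that $q^2p\in\Sigma_k$. *)

theory Defs
  imports Complex_Main "HOL-Library.Poly_Mapping"
begin

text \<open>Real multivariate polynomials: maps from monomials (exponent vectors,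
  variable i is x_(i+1)) to real coefficients, finitely supported.
  Ring operations come from HOL-Library.Poly_Mapping.\<close>

type_synonym mpoly = "(nat \<Rightarrow>\<^sub>0 nat) \<Rightarrow>\<^sub>0 real"

definition mvar :: "nat \<Rightarrow> mpoly" where
  "mvar i = Poly_Mapping.single (Poly_Mapping.single i 1) 1"

definition mdeg :: "(nat \<Rightarrow>\<^sub>0 nat) \<Rightarrow> nat" where
  "mdeg m = sum (Poly_Mapping.lookup m) (Poly_Mapping.keys m)"

definition in_vars :: "nat \<Rightarrow> mpoly \<Rightarrow> bool" where
  "in_vars k p \<longleftrightarrow> (\<forall>m\<in>Poly_Mapping.keys p. Poly_Mapping.keys m \<subseteq> {..<k})"

definition homogeneous :: "mpoly \<Rightarrow> bool" where
  "homogeneous p \<longleftrightarrow> (\<exists>d. \<forall>m\<in>Poly_Mapping.keys p. mdeg m = d)"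

definition meval :: "mpoly \<Rightarrow> (nat \<Rightarrow> real) \<Rightarrow> real" where
  "meval p x = (\<Sum>m\<in>Poly_Mapping.keys p. Poly_Mapping.lookup p m * (\<Prod>i\<in>Poly_Mapping.keys m. x i ^ Poly_Mapping.lookup m i))"

definition Pk :: "nat \<Rightarrow> mpoly \<Rightarrow> bool" where
  "Pk k p \<longleftrightarrow> in_vars k p \<and> homogeneous p \<and> (\<forall>x. 0 \<le> meval p x)"

definition Sigmak :: "nat \<Rightarrow> mpoly \<Rightarrow> bool" where
  "Sigmak k p \<longleftrightarrow> in_vars k p \<and> homogeneous p \<and>
     (\<exists>qs. (\<forall>q\<in>set qs. in_vars k q) \<and> p = sum_list (map (\<lambda>q. q ^ 2) qs))"

definition Deltak :: "nat \<Rightarrow> mpoly \<Rightarrow> bool" where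
  "Deltak k p \<longleftrightarrow> Pk k p \<and> \<not> Sigmak k p"

definition even_poly :: "mpoly \<Rightarrow> bool" where
  "even_poly p \<longleftrightarrow> (\<forall>m\<in>Poly_Mapping.keys p. \<forall>i. even (Poly_Mapping.lookup m i))"

definition bad_point :: "nat \<Rightarrow> mpoly \<Rightarrow> (nat \<Rightarrow> real) \<Rightarrow> bool" where
  "bad_point k p x0 \<longleftrightarrow> Pk k p \<and>
     (\<forall>q. in_vars k q \<and> Sigmak k (q ^ 2 * p) \<longrightarrow> meval q x0 = 0)"

end

theory Submission
  imports Defs
begin

(*
  The witness is x\<^sub>1\<^sup>2\<cdots>x\<^sub>k\<^sup>2 S(x\<^sub>2,x\<^sub>3,x\<^sub>4) with S the Choi-Lam form, nonnegative by AM-GM.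
  Suppose q\<^sup>2 p = \<Sum> h\<^sub>j\<^sup>2 with q(e\<^sub>1) \<noteq> 0. Then q contains a pure power of x\<^sub>1, and a linear
  weight on exponents makes the largest one, c x\<^sub>1\<^sup>A, the unique top term of q while all terms of
  p get the same even weight. Top-weight parts are multiplicative, and since the squares of
  top monomials cannot cancel, the h\<^sub>j have at most half the top weight of \<Sum> h\<^sub>j\<^sup>2; taking
  top-weight parts gives c\<^sup>2 x\<^sub>1\<^sup>2\<^sup>A p = \<Sum> g\<^sub>j\<^sup>2. There the monomials of the g\<^sub>j lie in half the
  Newton polytope, and the centre x\<^sub>2\<^sup>2x\<^sub>3\<^sup>2x\<^sub>4\<^sup>2 of the Choi-Lam triangle is the midpoint of no
  two distinct lattice points of it. So the coefficient of the corresponding monomial in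
  \<Sum> g\<^sub>j\<^sup>2 is a sum of squares, yet it equals -3c\<^sup>2. Taking q = 1 shows that p is not a sum
  of squares either.
*)

section \<open>Coefficients and top-weight parts\<close>

lemma lookup_mult_eq_sum:
  fixes f g :: mpoly
  assumes "finite A" "Poly_Mapping.keys f \<subseteq> A" "finite B" "Poly_Mapping.keys g \<subseteq> B"
  shows "Poly_Mapping.lookup (f * g) \<mu> =
    (\<Sum>a\<in>A. \<Sum>b\<in>B. (Poly_Mapping.lookup f a * Poly_Mapping.lookup g b when \<mu> = a + b))"
proof -
  have inner: "Sum_any (\<lambda>b. Poly_Mapping.lookup g b when \<mu> = a + b) =
      (\<Sum>b\<in>B. Poly_Mapping.lookup g b when \<mu> = a + b)" for a
    by (rule Sum_any.expand_superset) (use assms in \<open>auto simp: in_keys_iff\<close>)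
  have "Poly_Mapping.lookup (f * g) \<mu> =
      Sum_any (\<lambda>a. Poly_Mapping.lookup f a * (\<Sum>b\<in>B. Poly_Mapping.lookup g b when \<mu> = a + b))"
    unfolding lookup_mult inner ..
  also have "\<dots> = (\<Sum>a\<in>A. Poly_Mapping.lookup f a * (\<Sum>b\<in>B. Poly_Mapping.lookup g b when \<mu> = a + b))"
    by (rule Sum_any.expand_superset) (use assms in \<open>auto simp: in_keys_iff\<close>)
  finally show ?thesis
    by (simp add: sum_distrib_left mult_when)
qed

lemma lookup_sum_list:
  "Poly_Mapping.lookup (sum_list xs) m = sum_list (map (\<lambda>x. Poly_Mapping.lookup x m) xs)"
  by (induct xs) (auto simp: lookup_add)

lemma keys_mult_weight_le:
  fixes f g :: mpoly and w :: "(nat \<Rightarrow>\<^sub>0 nat) \<Rightarrow> int"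
  assumes add: "\<And>x y. w (x + y) = w x + w y"
    and "\<forall>a\<in>Poly_Mapping.keys f. w a \<le> U" "\<forall>b\<in>Poly_Mapping.keys g. w b \<le> U'"
  shows "\<forall>s\<in>Poly_Mapping.keys (f * g). w s \<le> U + U'"
proof
  fix s assume "s \<in> Poly_Mapping.keys (f * g)"
  then obtain a b where "s = a + b" "a \<in> Poly_Mapping.keys f" "b \<in> Poly_Mapping.keys g"
    using keys_mult by blast
  moreover from this assms have "w a \<le> U" "w b \<le> U'"
    by auto
  ultimately show "w s \<le> U + U'"
    by (simp add: add add_mono)
qed

definition weight_part :: "((nat \<Rightarrow>\<^sub>0 nat) \<Rightarrow> int) \<Rightarrow> int \<Rightarrow> mpoly \<Rightarrow> mpoly" where
  "weight_part w V f = Abs_poly_mapping (\<lambda>m. Poly_Mapping.lookup f m when w m = V)"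

lemma lookup_weight_part:
  "Poly_Mapping.lookup (weight_part w V f) m = (Poly_Mapping.lookup f m when w m = V)"
proof -
  have "finite {m. (Poly_Mapping.lookup f m when w m = V) \<noteq> 0}"
    by (rule finite_subset[of _ "Poly_Mapping.keys f"]) (auto simp: in_keys_iff)
  then show ?thesis
    unfolding weight_part_def by simp
qed

lemma keys_weight_part_subset: "Poly_Mapping.keys (weight_part w V f) \<subseteq> Poly_Mapping.keys f"
  by (auto simp: in_keys_iff lookup_weight_part)

lemma weight_part_add: "weight_part w V (f + g) = weight_part w V f + weight_part w V g"
  by (rule poly_mapping_eqI) (simp add: lookup_weight_part lookup_add when_add_distrib)

lemma weight_part_0 [simp]: "weight_part w V 0 = 0"
  by (rule poly_mapping_eqI) (simp add: lookup_weight_part)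

lemma weight_part_eq_self:
  assumes "\<forall>m\<in>Poly_Mapping.keys f. w m = V"
  shows "weight_part w V f = f"
  by (rule poly_mapping_eqI) (use assms in \<open>auto simp: lookup_weight_part in_keys_iff when_def\<close>)

lemma weight_part_eq_single:
  assumes "w \<mu> = V" "\<forall>m\<in>Poly_Mapping.keys f. w m = V \<longrightarrow> m = \<mu>"
  shows "weight_part w V f = Poly_Mapping.single \<mu> (Poly_Mapping.lookup f \<mu>)"
  by (rule poly_mapping_eqI)
     (use assms in \<open>auto simp: lookup_weight_part lookup_single in_keys_iff when_def\<close>)

lemma weight_part_mult:
  assumes add: "\<And>x y. w (x + y) = w x + w y"
    and f: "\<forall>a\<in>Poly_Mapping.keys f. w a \<le> U" and g: "\<forall>b\<in>Poly_Mapping.keys g. w b \<le> U'"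
  shows "weight_part w (U + U') (f * g) = weight_part w U f * weight_part w U' g"
proof (rule poly_mapping_eqI)
  fix \<mu>
  let ?F = "Poly_Mapping.keys f" and ?G = "Poly_Mapping.keys g"
  have top: "((Poly_Mapping.lookup f a * Poly_Mapping.lookup g b when \<mu> = a + b) when w \<mu> = U + U') =
      ((Poly_Mapping.lookup f a when w a = U) * (Poly_Mapping.lookup g b when w b = U') when \<mu> = a + b)"
    if "a \<in> ?F" "b \<in> ?G" for a b
  proof (cases "\<mu> = a + b")
    case True
    then have "w \<mu> = w a + w b"
      using add by simp
    moreover have "w a \<le> U" "w b \<le> U'"
      using f g that by auto
    ultimately show ?thesis
      by (auto simp: when_def)
  qed simp
  have "Poly_Mapping.lookup (weight_part w (U + U') (f * g)) \<mu> =
      (\<Sum>a\<in>?F. \<Sum>b\<in>?G. ((Poly_Mapping.lookup f a * Poly_Mapping.lookup g b when \<mu> = a + b)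
        when w \<mu> = U + U'))"
    by (cases "w \<mu> = U + U'") (simp_all add: lookup_weight_part lookup_mult_eq_sum[of ?F _ ?G])
  also have "\<dots> = (\<Sum>a\<in>?F. \<Sum>b\<in>?G. ((Poly_Mapping.lookup f a when w a = U) *
      (Poly_Mapping.lookup g b when w b = U') when \<mu> = a + b))"
    by (intro sum.cong refl top)
  also have "\<dots> = Poly_Mapping.lookup (weight_part w U f * weight_part w U' g) \<mu>"
    by (simp add: lookup_mult_eq_sum[of ?F _ ?G] lookup_weight_part keys_weight_part_subset)
  finally show "Poly_Mapping.lookup (weight_part w (U + U') (f * g)) \<mu> =
      Poly_Mapping.lookup (weight_part w U f * weight_part w U' g) \<mu>" .
qed

lemma weight_part_sum_squares:
  assumes add: "\<And>x y. w (x + y) = w x + w y"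
    and "\<forall>g\<in>set gs. \<forall>m\<in>Poly_Mapping.keys g. w m \<le> V"
  shows "weight_part w (V + V) (sum_list (map (\<lambda>g. g^2) gs)) =
    sum_list (map (\<lambda>g. (weight_part w V g)^2) gs)"
  using assms(2)
proof (induct gs)
  case (Cons g gs)
  then have "weight_part w (V + V) (g * g) = weight_part w V g * weight_part w V g"
    by (intro weight_part_mult[where w = w, OF add]) auto
  with Cons show ?case
    by (simp add: weight_part_add power2_eq_square)
qed simp

section \<open>Sums of squares and half Newton polytopes\<close>

lemma lookup_power2_eq_sum:
  fixes g :: mpoly
  shows "Poly_Mapping.lookup (g^2) \<mu> = (\<Sum>a\<in>Poly_Mapping.keys g. \<Sum>b\<in>Poly_Mapping.keys g.
    (Poly_Mapping.lookup g a * Poly_Mapping.lookup g b when \<mu> = a + b))"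
  unfolding power2_eq_square by (rule lookup_mult_eq_sum) auto

lemma lookup_sum_squares_nonneg:
  fixes gs :: "mpoly list"
  assumes "\<forall>g\<in>set gs. \<forall>a\<in>Poly_Mapping.keys g. \<forall>b\<in>Poly_Mapping.keys g. a + b = \<mu> \<longrightarrow> a = b"
  shows "0 \<le> Poly_Mapping.lookup (sum_list (map (\<lambda>g. g^2) gs)) \<mu>"
proof -
  have "0 \<le> Poly_Mapping.lookup (g^2) \<mu>" if g: "g \<in> set gs" for g
    unfolding lookup_power2_eq_sum
  proof (intro sum_nonneg)
    fix a b assume "a \<in> Poly_Mapping.keys g" "b \<in> Poly_Mapping.keys g"
    with assms g have "\<mu> = a + b \<longrightarrow> a = b"
      by auto
    then show "0 \<le> (Poly_Mapping.lookup g a * Poly_Mapping.lookup g b when \<mu> = a + b)"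
      by (auto simp: when_def)
  qed
  then show ?thesis
    by (auto simp: lookup_sum_list intro!: sum_list_nonneg)
qed

lemma sum_sum_when_diag:
  assumes "finite K" "\<mu> \<in> K"
  shows "(\<Sum>a\<in>K. \<Sum>b\<in>K. ((f a b :: 'b :: comm_monoid_add) when a = \<mu> \<and> b = \<mu>)) = f \<mu> \<mu>"
proof -
  have "(\<Sum>b\<in>K. (f a b when a = \<mu> \<and> b = \<mu>)) = (f a \<mu> when a = \<mu>)" for a
    using assms by (cases "a = \<mu>") (simp_all add: when_def)
  with assms show ?thesis
    by (simp add: when_def)
qed

lemma lookup_sum_squares_double:
  fixes gs :: "mpoly list"
  assumes "\<forall>g\<in>set gs. \<forall>a\<in>Poly_Mapping.keys g. \<forall>b\<in>Poly_Mapping.keys g. a + b = \<mu> + \<mu> \<longrightarrow> a = \<mu>"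
  shows "Poly_Mapping.lookup (sum_list (map (\<lambda>g. g^2) gs)) (\<mu> + \<mu>) =
    sum_list (map (\<lambda>g. (Poly_Mapping.lookup g \<mu>)^2) gs)"
proof -
  have "Poly_Mapping.lookup (g^2) (\<mu> + \<mu>) = (Poly_Mapping.lookup g \<mu>)^2" if g: "g \<in> set gs" for g
  proof -
    let ?K = "insert \<mu> (Poly_Mapping.keys g)"
    have "Poly_Mapping.lookup (g^2) (\<mu> + \<mu>) = (\<Sum>a\<in>?K. \<Sum>b\<in>?K.
        (Poly_Mapping.lookup g a * Poly_Mapping.lookup g b when \<mu> + \<mu> = a + b))"
      unfolding power2_eq_square by (rule lookup_mult_eq_sum) auto
    also have "\<dots> = (\<Sum>a\<in>?K. \<Sum>b\<in>?K.
        (Poly_Mapping.lookup g a * Poly_Mapping.lookup g b when a = \<mu> \<and> b = \<mu>))"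
    proof (intro sum.cong refl)
      fix a b
      show "(Poly_Mapping.lookup g a * Poly_Mapping.lookup g b when \<mu> + \<mu> = a + b) =
          (Poly_Mapping.lookup g a * Poly_Mapping.lookup g b when a = \<mu> \<and> b = \<mu>)"
      proof (cases "a \<in> Poly_Mapping.keys g \<and> b \<in> Poly_Mapping.keys g \<and> \<mu> + \<mu> = a + b")
        case True
        with assms g have "a = \<mu>" by auto
        with True show ?thesis by auto
      qed (auto simp: when_def in_keys_iff)
    qed
    also have "\<dots> = (Poly_Mapping.lookup g \<mu>)^2"
      by (simp add: sum_sum_when_diag power2_eq_square)
    finally show ?thesis .
  qed
  then show ?thesis
    unfolding lookup_sum_list map_map by (intro arg_cong[where f = sum_list] map_cong) auto
qed

lemma midpoint_eq_if_norms_le: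
  fixes a b c :: "nat \<Rightarrow>\<^sub>0 nat"
  assumes K: "finite K" "Poly_Mapping.keys a \<subseteq> K" "Poly_Mapping.keys c \<subseteq> K"
    and abc: "a + b = c + c"
    and le: "(\<Sum>i\<in>K. (int (Poly_Mapping.lookup a i))^2) \<le> (\<Sum>i\<in>K. (int (Poly_Mapping.lookup c i))^2)"
            "(\<Sum>i\<in>K. (int (Poly_Mapping.lookup b i))^2) \<le> (\<Sum>i\<in>K. (int (Poly_Mapping.lookup c i))^2)"
  shows "a = c"
proof -
  define A B C where "A i = int (Poly_Mapping.lookup a i)" and "B i = int (Poly_Mapping.lookup b i)"
    and "C i = int (Poly_Mapping.lookup c i)" for i
  have mid: "A i + B i = 2 * C i" for i
    using arg_cong[OF abc, of "\<lambda>x. Poly_Mapping.lookup x i"] by (simp add: A_def B_def C_def lookup_add)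
  have "(A i - B i)^2 = 2 * (A i)^2 + 2 * (B i)^2 - (A i + B i)^2" for i
    by (simp add: power2_eq_square algebra_simps)
  then have "(A i - B i)^2 = 2 * (A i)^2 + 2 * (B i)^2 - 4 * (C i)^2" for i
    by (simp add: mid power2_eq_square)
  then have "(\<Sum>i\<in>K. (A i - B i)^2) =
      2 * (\<Sum>i\<in>K. (A i)^2) + 2 * (\<Sum>i\<in>K. (B i)^2) - 4 * (\<Sum>i\<in>K. (C i)^2)"
    by (simp only: sum_subtractf sum.distrib sum_distrib_left)
  with le have "(\<Sum>i\<in>K. (A i - B i)^2) \<le> 0"
    unfolding A_def B_def C_def by linarith
  then have "\<forall>i\<in>K. (A i - B i)^2 = 0"
    using sum_nonneg_eq_0_iff[OF K(1), of "\<lambda>i. (A i - B i)^2"] by (simp add: antisym sum_nonneg)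
  then have "Poly_Mapping.lookup a i = Poly_Mapping.lookup c i" if "i \<in> K" for i
    using that mid[of i] by (auto simp: A_def C_def)
  moreover have "Poly_Mapping.lookup a i = 0 \<and> Poly_Mapping.lookup c i = 0" if "i \<notin> K" for i
    using that K by (auto simp: in_keys_iff)
  ultimately show ?thesis
    by (metis poly_mapping_eqI)
qed

text \<open>Take a monomial of maximal squared norm among those of maximal weight.\<close>

lemma exists_vertex_of_max_weight:
  fixes S :: "(nat \<Rightarrow>\<^sub>0 nat) set" and w :: "(nat \<Rightarrow>\<^sub>0 nat) \<Rightarrow> int"
  assumes add: "\<And>x y. w (x + y) = w x + w y" and S: "finite S" "S \<noteq> {}"
  obtains \<mu> where "\<mu> \<in> S" "\<forall>x\<in>S. w x \<le> w \<mu>" "\<forall>a\<in>S. \<forall>b\<in>S. a + b = \<mu> + \<mu> \<longrightarrow> a = \<mu>"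
proof -
  define W where "W = Max (w ` S)"
  define SW where "SW = {x\<in>S. w x = W}"
  define K where "K = (\<Union>x\<in>S. Poly_Mapping.keys x)"
  define nf where "nf x = (\<Sum>i\<in>K. (int (Poly_Mapping.lookup x i))^2)" for x
  have W: "\<forall>x\<in>S. w x \<le> W" "W \<in> w ` S"
    using S by (auto simp: W_def)
  then have "finite SW" "SW \<noteq> {}"
    using S by (auto simp: SW_def)
  then have "Max (nf ` SW) \<in> nf ` SW"
    by (intro Max_in) auto
  then obtain \<mu> where \<mu>: "\<mu> \<in> SW" "nf \<mu> = Max (nf ` SW)"
    by auto
  have "a = \<mu>" if "a \<in> S" "b \<in> S" "a + b = \<mu> + \<mu>" for a b
  proof -
    have "w a + w b = W + W"
      using that(3) \<mu>(1) add[of a b] add[of \<mu> \<mu>] by (simp add: SW_def)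
    moreover have "w a \<le> W" "w b \<le> W"
      using W(1) that by auto
    ultimately have "a \<in> SW" "b \<in> SW"
      using that by (auto simp: SW_def)
    with \<mu> \<open>finite SW\<close> have "nf a \<le> nf \<mu>" "nf b \<le> nf \<mu>"
      by auto
    moreover have "finite K" "Poly_Mapping.keys a \<subseteq> K" "Poly_Mapping.keys \<mu> \<subseteq> K"
      using S that \<mu>(1) by (auto simp: K_def SW_def)
    ultimately show ?thesis
      using midpoint_eq_if_norms_le that(3) unfolding nf_def by blast
  qed
  with \<mu> W show ?thesis
    by (intro that) (auto simp: SW_def)
qed

text \<open>The monomials of the \<open>g\<close>'s in a sum of squares lie in half the Newton polytope of the
  sum, detected here through linear weights: the square of the top-weight vertex monomial
  cannot cancel.\<close>

lemma sum_squares_keys_weight_bound: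
  fixes gs :: "mpoly list" and w :: "(nat \<Rightarrow>\<^sub>0 nat) \<Rightarrow> int"
  assumes add: "\<And>x y. w (x + y) = w x + w y"
    and bound: "\<forall>s\<in>Poly_Mapping.keys (sum_list (map (\<lambda>g. g^2) gs)). w s \<le> T"
    and g: "g \<in> set gs" "m \<in> Poly_Mapping.keys g"
  shows "2 * w m \<le> T"
proof -
  define S where "S = (\<Union>g\<in>set gs. Poly_Mapping.keys g)"
  have "finite S" "m \<in> S"
    using g by (auto simp: S_def)
  then obtain \<mu> where \<mu>: "\<mu> \<in> S" "\<forall>x\<in>S. w x \<le> w \<mu>"
    and vertex: "\<forall>a\<in>S. \<forall>b\<in>S. a + b = \<mu> + \<mu> \<longrightarrow> a = \<mu>"
    using exists_vertex_of_max_weight[where w = w, OF add] by blast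
  obtain g0 where g0: "g0 \<in> set gs" "\<mu> \<in> Poly_Mapping.keys g0"
    using \<mu>(1) by (auto simp: S_def)
  have "0 < (Poly_Mapping.lookup g0 \<mu>)^2"
    using g0(2) by (simp add: in_keys_iff)
  also have "\<dots> \<le> sum_list (map (\<lambda>g. (Poly_Mapping.lookup g \<mu>)^2) gs)"
    by (rule member_le_sum_list) (use g0(1) in auto)
  also have "\<dots> = Poly_Mapping.lookup (sum_list (map (\<lambda>g. g^2) gs)) (\<mu> + \<mu>)"
    using vertex by (intro lookup_sum_squares_double[symmetric]) (auto simp: S_def)
  finally have "w (\<mu> + \<mu>) \<le> T"
    using bound by (auto simp: in_keys_iff)
  with \<mu> \<open>m \<in> S\<close> add show ?thesis
    by force
qed

lemma weight_part_sos_multiple: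
  fixes p q :: mpoly and w :: "(nat \<Rightarrow>\<^sub>0 nat) \<Rightarrow> int"
  assumes add: "\<And>x y. w (x + y) = w x + w y"
    and q: "\<forall>m\<in>Poly_Mapping.keys q. w m \<le> A" "weight_part w A q = Poly_Mapping.single \<mu> c"
    and p: "\<forall>m\<in>Poly_Mapping.keys p. w m = B + B"
    and sos: "q^2 * p = sum_list (map (\<lambda>h. h^2) hs)"
  shows "Poly_Mapping.single (\<mu> + \<mu>) (c * c) * p =
    sum_list (map (\<lambda>h. (weight_part w (A + B) h)^2) hs)"
proof -
  have qq: "\<forall>s\<in>Poly_Mapping.keys (q * q). w s \<le> A + A"
    using keys_mult_weight_le[OF add q(1) q(1)] .
  have p_le: "\<forall>s\<in>Poly_Mapping.keys p. w s \<le> B + B"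
    using p by simp
  have "\<forall>s\<in>Poly_Mapping.keys (q * q * p). w s \<le> (A + B) + (A + B)"
    using keys_mult_weight_le[OF add qq p_le] by (simp add: algebra_simps)
  then have "\<forall>h\<in>set hs. \<forall>m\<in>Poly_Mapping.keys h. w m \<le> A + B"
    using sum_squares_keys_weight_bound[where w = w, OF add, of hs] sos by (fastforce simp: power2_eq_square)
  then have "sum_list (map (\<lambda>h. (weight_part w (A + B) h)^2) hs) =
      weight_part w ((A + B) + (A + B)) (sum_list (map (\<lambda>h. h^2) hs))"
    using weight_part_sum_squares[where w = w, OF add, of hs "A + B"] by simp
  also have "\<dots> = weight_part w ((A + A) + (B + B)) (q * q * p)"
    using sos by (simp add: power2_eq_square algebra_simps)
  also have "\<dots> = weight_part w A q * weight_part w A q * weight_part w (B + B) p"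
    using weight_part_mult[OF add qq p_le] weight_part_mult[OF add q(1) q(1)] by simp
  also have "\<dots> = Poly_Mapping.single (\<mu> + \<mu>) (c * c) * p"
    using q(2) p by (simp add: weight_part_eq_self mult_single)
  finally show ?thesis ..
qed

lemma mdeg_eq_sum:
  assumes "finite K" "Poly_Mapping.keys m \<subseteq> K"
  shows "mdeg m = (\<Sum>i\<in>K. Poly_Mapping.lookup m i)"
  unfolding mdeg_def by (rule sum.mono_neutral_left) (use assms in \<open>auto simp: in_keys_iff\<close>)

lemma mdeg_add: "mdeg (a + b) = mdeg a + mdeg b"
proof -
  let ?K = "Poly_Mapping.keys a \<union> Poly_Mapping.keys b"
  have "mdeg (a + b) = (\<Sum>i\<in>?K. Poly_Mapping.lookup (a + b) i)"
    by (rule mdeg_eq_sum) (auto dest: keys_add[THEN subsetD])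
  also have "\<dots> = mdeg a + mdeg b"
    by (simp add: lookup_add sum.distrib mdeg_eq_sum[of ?K])
  finally show ?thesis .
qed

lemma mdeg_single [simp]: "mdeg (Poly_Mapping.single i n) = n"
  unfolding mdeg_def by simp

lemma mdeg_0 [simp]: "mdeg 0 = 0"
  unfolding mdeg_def by simp

definition monom_val :: "(nat \<Rightarrow>\<^sub>0 nat) \<Rightarrow> (nat \<Rightarrow> real) \<Rightarrow> real" where
  "monom_val m x = (\<Prod>i\<in>Poly_Mapping.keys m. x i ^ Poly_Mapping.lookup m i)"

lemma monom_val_eq_prod:
  assumes "finite K" "Poly_Mapping.keys m \<subseteq> K"
  shows "monom_val m x = (\<Prod>i\<in>K. x i ^ Poly_Mapping.lookup m i)"
  unfolding monom_val_def by (rule prod.mono_neutral_left) (use assms in \<open>auto simp: in_keys_iff\<close>)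

lemma monom_val_add: "monom_val (a + b) x = monom_val a x * monom_val b x"
proof -
  let ?K = "Poly_Mapping.keys a \<union> Poly_Mapping.keys b"
  have "monom_val (a + b) x = (\<Prod>i\<in>?K. x i ^ Poly_Mapping.lookup (a + b) i)"
    by (rule monom_val_eq_prod) (auto dest: keys_add[THEN subsetD])
  also have "\<dots> = monom_val a x * monom_val b x"
    by (simp add: lookup_add power_add prod.distrib monom_val_eq_prod[of ?K])
  finally show ?thesis .
qed

lemma monom_val_single [simp]: "monom_val (Poly_Mapping.single i n) x = x i ^ n"
  unfolding monom_val_def by simp

lemma monom_val_0 [simp]: "monom_val 0 x = 1"
  unfolding monom_val_def by simp

lemma meval_single: "meval (Poly_Mapping.single m c) x = c * monom_val m x"
  unfolding meval_def monom_val_def by simp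

lemma meval_add: "meval (f + g) x = meval f x + meval g x"
  unfolding meval_def
  by (rule setsum_keys_plus_distrib[where f = "\<lambda>m v. v * (\<Prod>i\<in>Poly_Mapping.keys m. x i ^ Poly_Mapping.lookup m i)"])
     (auto simp: algebra_simps)

lemma meval_1 [simp]: "meval 1 x = 1"
  by (simp add: meval_def)

lemma keys_single_mult:
  "Poly_Mapping.keys (Poly_Mapping.single M v * f) \<subseteq> (\<lambda>n. M + n) ` Poly_Mapping.keys f"
  using keys_mult[of "Poly_Mapping.single M v" f] by (auto split: if_splits)

lemma lookup_single_mult:
  fixes f :: mpoly
  shows "Poly_Mapping.lookup (Poly_Mapping.single M v * f) (M + n) = v * Poly_Mapping.lookup f n"
proof -
  have "Poly_Mapping.lookup (Poly_Mapping.single M v * f) (M + n) = (\<Sum>a\<in>{M}. \<Sum>b\<in>Poly_Mapping.keys f.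
      (Poly_Mapping.lookup (Poly_Mapping.single M v) a * Poly_Mapping.lookup f b when M + n = a + b))"
    by (rule lookup_mult_eq_sum) auto
  also have "\<dots> = (\<Sum>b\<in>Poly_Mapping.keys f. (v * Poly_Mapping.lookup f b when b = n))"
    by (simp add: when_def)
  also have "\<dots> = v * Poly_Mapping.lookup f n"
    by (cases "n \<in> Poly_Mapping.keys f") (auto simp: when_def in_keys_iff)
  finally show ?thesis .
qed

section \<open>Sum-of-squares multipliers vanish at the first unit vector\<close>

lemma keys_subset_0_iff: "Poly_Mapping.keys m \<subseteq> {0} \<longleftrightarrow> (\<exists>a. m = Poly_Mapping.single 0 a)"
proof
  assume "Poly_Mapping.keys m \<subseteq> {0}"
  then have "m = Poly_Mapping.single 0 (Poly_Mapping.lookup m 0)"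
    by (intro poly_mapping_eqI) (auto simp: lookup_single in_keys_iff when_def)
  then show "\<exists>a. m = Poly_Mapping.single 0 a" ..
next
  assume "\<exists>a. m = Poly_Mapping.single 0 a"
  then obtain a where "m = Poly_Mapping.single 0 a" ..
  then show "Poly_Mapping.keys m \<subseteq> {0}"
    by (cases "a = 0") simp_all
qed

lemma monom_val_e0:
  "monom_val m (\<lambda>i. if i = 0 then 1 else 0) = (if Poly_Mapping.keys m \<subseteq> {0} then 1 else 0)"
proof (cases "Poly_Mapping.keys m \<subseteq> {0}")
  case True
  then have "monom_val m (\<lambda>i. if i = 0 then 1 else 0) = 1"
    unfolding monom_val_def by (intro prod.neutral) auto
  with True show ?thesis
    by simp
next
  case False
  then obtain i where i: "i \<in> Poly_Mapping.keys m" "i \<noteq> 0"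
    by blast
  then have "(if i = 0 then 1 else 0 :: real) ^ Poly_Mapping.lookup m i = 0"
    by (simp add: in_keys_iff)
  with i have "monom_val m (\<lambda>i. if i = 0 then 1 else 0) = 0"
    unfolding monom_val_def by (intro prod_zero) auto
  with False show ?thesis
    by simp
qed

lemma pure_power_key_if_meval_e0_neq_0:
  fixes q :: mpoly
  assumes "meval q (\<lambda>i. if i = 0 then 1 else 0) \<noteq> 0"
  obtains a where "Poly_Mapping.single 0 a \<in> Poly_Mapping.keys q"
proof -
  have "\<exists>m\<in>Poly_Mapping.keys q. Poly_Mapping.keys m \<subseteq> {0}"
  proof (rule ccontr)
    assume "\<not> ?thesis"
    then have "meval q (\<lambda>i. if i = 0 then 1 else 0) =
        (\<Sum>m\<in>Poly_Mapping.keys q. Poly_Mapping.lookup q m * 0)"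
      unfolding meval_def by (intro sum.cong refl) (simp add: monom_val_e0[unfolded monom_val_def])
    with assms show False
      by simp
  qed
  with that show ?thesis
    unfolding keys_subset_0_iff by blast
qed

definition x0_weight :: "nat \<Rightarrow> (nat \<Rightarrow>\<^sub>0 nat) \<Rightarrow> int" where
  "x0_weight N m = int (N + 1) * int (Poly_Mapping.lookup m 0) - int N * int (mdeg m)"

lemma x0_weight_add: "x0_weight N (x + y) = x0_weight N x + x0_weight N y"
  by (simp add: x0_weight_def lookup_add mdeg_add algebra_simps)

lemma x0_weight_single_0 [simp]: "x0_weight N (Poly_Mapping.single 0 a) = int a"
  by (simp add: x0_weight_def algebra_simps)

lemma x0_weight_neg:
  assumes "mdeg m < N" "\<not> Poly_Mapping.keys m \<subseteq> {0}"
  shows "x0_weight N m < 0"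
proof -
  obtain i where i: "i \<in> Poly_Mapping.keys m" "i \<noteq> 0"
    using assms(2) by blast
  have "Poly_Mapping.lookup m 0 + Poly_Mapping.lookup m i = (\<Sum>j\<in>{0, i}. Poly_Mapping.lookup m j)"
    using i by simp
  also have "\<dots> \<le> (\<Sum>j\<in>Poly_Mapping.keys m \<union> {0}. Poly_Mapping.lookup m j)"
    by (rule sum_mono2) (use i in auto)
  also have "\<dots> = mdeg m"
    by (rule mdeg_eq_sum[symmetric]) auto
  finally have "Poly_Mapping.lookup m 0 + 1 \<le> mdeg m"
    using i by (simp add: in_keys_iff)
  then have "int N * (int (Poly_Mapping.lookup m 0) + 1) \<le> int N * int (mdeg m)"
    by (intro mult_left_mono) auto
  with assms(1) \<open>Poly_Mapping.lookup m 0 + 1 \<le> mdeg m\<close> show ?thesis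
    unfolding x0_weight_def by (simp add: algebra_simps)
qed

lemma x0_weight_top:
  fixes q :: mpoly
  assumes "Poly_Mapping.single 0 a \<in> Poly_Mapping.keys q"
  obtains N A where "Poly_Mapping.single 0 A \<in> Poly_Mapping.keys q"
    "\<forall>m\<in>Poly_Mapping.keys q. x0_weight N m \<le> int A"
    "\<forall>m\<in>Poly_Mapping.keys q. x0_weight N m = int A \<longrightarrow> m = Poly_Mapping.single 0 A"
proof -
  define N where "N = 1 + (\<Sum>m\<in>Poly_Mapping.keys q. mdeg m)"
  define P where "P = {a. Poly_Mapping.single 0 a \<in> Poly_Mapping.keys q}"
  have "finite P"
    unfolding P_def by (rule finite_subset[of _ "(\<lambda>m. Poly_Mapping.lookup m 0) ` Poly_Mapping.keys q"]) force+
  moreover have "P \<noteq> {}"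
    using assms by (auto simp: P_def)
  ultimately have A: "Max P \<in> P" "\<forall>a\<in>P. a \<le> Max P"
    by auto
  have top: "x0_weight N m \<le> int (Max P) \<and>
      (x0_weight N m = int (Max P) \<longrightarrow> m = Poly_Mapping.single 0 (Max P))"
    if m: "m \<in> Poly_Mapping.keys q" for m
  proof (cases "Poly_Mapping.keys m \<subseteq> {0}")
    case True
    then obtain a where "m = Poly_Mapping.single 0 a"
      unfolding keys_subset_0_iff ..
    with m A show ?thesis
      by (auto simp: P_def)
  next
    case False
    have "mdeg m < N"
      unfolding N_def using m member_le_sum[of m "Poly_Mapping.keys q" mdeg] by simp
    then have "x0_weight N m < 0"
      using False by (rule x0_weight_neg)
    then show ?thesis
      by simp
  qed
  show ?thesis
  proof (rule that[of "Max P" N])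
    show "Poly_Mapping.single 0 (Max P) \<in> Poly_Mapping.keys q"
      using A(1) by (simp add: P_def)
  qed (use top in blast)+
qed

lemma sos_multiple_vanishes_at_e0:
  fixes p q :: mpoly
  assumes p: "\<forall>m\<in>Poly_Mapping.keys p. Poly_Mapping.lookup m 0 = e \<and> mdeg m = d"
    and not_sos: "\<And>A c gs. c > 0 \<Longrightarrow>
      Poly_Mapping.single (Poly_Mapping.single 0 A) c * p \<noteq> sum_list (map (\<lambda>g. g^2) gs)"
    and sos: "q^2 * p = sum_list (map (\<lambda>h. h^2) hs)"
  shows "meval q (\<lambda>i. if i = 0 then 1 else 0) = 0"
proof (rule ccontr)
  assume "meval q (\<lambda>i. if i = 0 then 1 else 0) \<noteq> 0"
  then obtain a where "Poly_Mapping.single 0 a \<in> Poly_Mapping.keys q"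
    by (rule pure_power_key_if_meval_e0_neq_0)
  then obtain N A where A: "Poly_Mapping.single 0 A \<in> Poly_Mapping.keys q"
    "\<forall>m\<in>Poly_Mapping.keys q. x0_weight N m \<le> int A"
    "\<forall>m\<in>Poly_Mapping.keys q. x0_weight N m = int A \<longrightarrow> m = Poly_Mapping.single 0 A"
    by (rule x0_weight_top)
  \<comment> \<open>doubled so that all terms of \<open>p\<close> get even weight\<close>
  define w where "w m = 2 * x0_weight N m" for m
  define c where "c = Poly_Mapping.lookup q (Poly_Mapping.single 0 A)"
  have add: "w (x + y) = w x + w y" for x y
    by (simp add: w_def x0_weight_add)
  define B where "B = int (N + 1) * int e - int N * int d"
  have top: "weight_part w (2 * int A) q = Poly_Mapping.single (Poly_Mapping.single 0 A) c"
    unfolding c_def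
  proof (rule weight_part_eq_single)
    show "w (Poly_Mapping.single 0 A) = 2 * int A"
      by (simp add: w_def)
    show "\<forall>m\<in>Poly_Mapping.keys q. w m = 2 * int A \<longrightarrow> m = Poly_Mapping.single 0 A"
      using A(3) by (simp add: w_def)
  qed
  have q_le: "\<forall>m\<in>Poly_Mapping.keys q. w m \<le> 2 * int A"
    using A(2) by (simp add: w_def)
  have p_weight: "\<forall>m\<in>Poly_Mapping.keys p. w m = B + B"
    using p by (simp add: w_def x0_weight_def B_def)
  have "c \<noteq> 0"
    using A(1) by (simp add: c_def in_keys_iff)
  then have "c * c > 0"
    using not_real_square_gt_zero[of c] by blast
  have "Poly_Mapping.single (Poly_Mapping.single 0 A + Poly_Mapping.single 0 A) (c * c) * p =
      sum_list (map (\<lambda>h. (weight_part w (2 * int A + B) h)^2) hs)"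
    by (rule weight_part_sos_multiple[OF add q_le top p_weight sos])
  then have "Poly_Mapping.single (Poly_Mapping.single 0 (A + A)) (c * c) * p =
      sum_list (map (\<lambda>g. g^2) (map (weight_part w (2 * int A + B)) hs))"
    by (simp only: single_add map_map comp_def)
  with \<open>c * c > 0\<close> show False
    using not_sos by blast
qed

section \<open>The Choi-Lam form\<close>

text \<open>Split on the largest of \<open>X, Y, Z\<close>: the matching identity below is then a sum of
  nonnegative terms.\<close>

lemma choi_lam_ineq:
  fixes X Y Z :: real
  assumes "0 \<le> X" "0 \<le> Y" "0 \<le> Z"
  shows "0 \<le> X^2 * Y + Y^2 * Z + Z^2 * X - 3 * X * Y * Z"
proof -
  have e1: "X^2*Y + Y^2*Z + Z^2*X - 3*X*Y*Z = Y*(X-Z)^2 + Z*((Y-X)*(Y-Z))" by algebra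
  have e2: "X^2*Y + Y^2*Z + Z^2*X - 3*X*Y*Z = Z*(Y-X)^2 + X*((Z-Y)*(Z-X))" by algebra
  have e3: "X^2*Y + Y^2*Z + Z^2*X - 3*X*Y*Z = X*(Z-Y)^2 + Y*((X-Z)*(X-Y))" by algebra
  consider "Y \<ge> X \<and> Y \<ge> Z" | "Z \<ge> X \<and> Z \<ge> Y" | "X \<ge> Y \<and> X \<ge> Z"
    by linarith
  then show ?thesis
  proof cases
    case 1
    then have "0 \<le> (Y - X) * (Y - Z)" by simp
    with assms show ?thesis unfolding e1 by simp
  next
    case 2
    then have "0 \<le> (Z - Y) * (Z - X)" by simp
    with assms show ?thesis unfolding e2 by simp
  next
    case 3
    then have "0 \<le> (X - Z) * (X - Y)" by simp
    with assms show ?thesis unfolding e3 by simp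
  qed
qed

text \<open>The exponents of the Choi-Lam form
  \<open>S(x\<^sub>2,x\<^sub>3,x\<^sub>4) = x\<^sub>2\<^sup>4x\<^sub>3\<^sup>2 + x\<^sub>3\<^sup>4x\<^sub>4\<^sup>2 + x\<^sub>4\<^sup>4x\<^sub>2\<^sup>2 - 3x\<^sub>2\<^sup>2x\<^sub>3\<^sup>2x\<^sub>4\<^sup>2\<close>;
  \<open>cl_centre\<close> is the centroid of the other three.\<close>

definition cl1 :: "nat \<Rightarrow>\<^sub>0 nat" where "cl1 = Poly_Mapping.single 1 4 + Poly_Mapping.single 2 2"
definition cl2 :: "nat \<Rightarrow>\<^sub>0 nat" where "cl2 = Poly_Mapping.single 2 4 + Poly_Mapping.single 3 2"
definition cl3 :: "nat \<Rightarrow>\<^sub>0 nat" where "cl3 = Poly_Mapping.single 3 4 + Poly_Mapping.single 1 2"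
definition cl_centre :: "nat \<Rightarrow>\<^sub>0 nat" where
  "cl_centre = Poly_Mapping.single 1 2 + Poly_Mapping.single 2 2 + Poly_Mapping.single 3 2"

definition choi_lam :: mpoly where
  "choi_lam = Poly_Mapping.single cl1 1 + Poly_Mapping.single cl2 1 + Poly_Mapping.single cl3 1 +
    Poly_Mapping.single cl_centre (-3)"

lemma lookup_cl:
  "Poly_Mapping.lookup cl1 i = (if i = 1 then 4 else if i = 2 then 2 else 0)"
  "Poly_Mapping.lookup cl2 i = (if i = 2 then 4 else if i = 3 then 2 else 0)"
  "Poly_Mapping.lookup cl3 i = (if i = 3 then 4 else if i = 1 then 2 else 0)"
  "Poly_Mapping.lookup cl_centre i = (if i \<in> {1, 2, 3} then 2 else 0)"
  by (simp_all add: cl1_def cl2_def cl3_def cl_centre_def lookup_add lookup_single when_def)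

lemma cl_exponents:
  assumes "x \<in> {cl1, cl2, cl3, cl_centre}"
  shows "Poly_Mapping.lookup x i \<noteq> 0 \<Longrightarrow> i \<in> {1, 2, 3}" "even (Poly_Mapping.lookup x i)" "mdeg x = 6"
  using assms by (auto simp: lookup_cl split: if_splits)
    (auto simp: cl1_def cl2_def cl3_def cl_centre_def mdeg_add)

lemma keys_choi_lam: "Poly_Mapping.keys choi_lam \<subseteq> {cl1, cl2, cl3, cl_centre}"
  by (auto simp: choi_lam_def in_keys_iff lookup_add lookup_single when_def split: if_splits)

lemma lookup_choi_lam_centre: "Poly_Mapping.lookup choi_lam cl_centre = -3"
proof -
  have "Poly_Mapping.lookup cl1 1 \<noteq> Poly_Mapping.lookup cl_centre 1"
    "Poly_Mapping.lookup cl2 1 \<noteq> Poly_Mapping.lookup cl_centre 1"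
    "Poly_Mapping.lookup cl3 2 \<noteq> Poly_Mapping.lookup cl_centre 2"
    by (simp_all add: lookup_cl)
  then have "cl1 \<noteq> cl_centre" "cl2 \<noteq> cl_centre" "cl3 \<noteq> cl_centre"
    by auto
  then show ?thesis
    by (simp add: choi_lam_def lookup_add lookup_single when_def)
qed

lemma in_vars_choi_lam:
  assumes "k \<ge> 4"
  shows "in_vars k choi_lam"
  unfolding in_vars_def
proof (intro ballI subsetI)
  fix m i assume "m \<in> Poly_Mapping.keys choi_lam" "i \<in> Poly_Mapping.keys m"
  moreover from this have "m \<in> {cl1, cl2, cl3, cl_centre}"
    using keys_choi_lam by blast
  ultimately have "i \<in> {1, 2, 3}"
    using cl_exponents(1) by (simp add: in_keys_iff)
  with assms show "i \<in> {..<k}"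
    by auto
qed

lemma int_triangle_centre:
  fixes u1 u2 u3 :: int
  assumes "\<bar>u1 - u2\<bar> \<le> 1" "\<bar>u2 - u3\<bar> \<le> 1" "\<bar>u3 - u1\<bar> \<le> 1" "u1 + u2 + u3 = 3"
  shows "u1 = 1 \<and> u2 = 1 \<and> u3 = 1"
  using assms by (simp add: abs_le_iff)

text \<open>The half Newton polytope of \<open>x\<^sup>M S\<close> is cut out by the weights \<open>m\<^sub>i - m\<^sub>j\<close> for cyclically
  consecutive variables of \<open>S\<close>, by their sum, and by the exponents of the other variables.\<close>

lemma choi_lam_centre_split:
  fixes M a b :: "nat \<Rightarrow>\<^sub>0 nat"
  assumes even: "even (Poly_Mapping.lookup M 1)" "even (Poly_Mapping.lookup M 2)"
      "even (Poly_Mapping.lookup M 3)"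
    and ab: "a + b = M + cl_centre"
    and half: "\<And>(w :: (nat \<Rightarrow>\<^sub>0 nat) \<Rightarrow> int) T. (\<And>x y. w (x + y) = w x + w y) \<Longrightarrow>
      \<forall>x\<in>{cl1, cl2, cl3, cl_centre}. w (M + x) \<le> T \<Longrightarrow> 2 * w a \<le> T \<and> 2 * w b \<le> T"
  shows "a = b"
proof (rule poly_mapping_eqI)
  fix i
  define L where "L m j = int (Poly_Mapping.lookup m j)" for m :: "nat \<Rightarrow>\<^sub>0 nat" and j
  have bound: "2 * w a \<le> w M + c \<and> 2 * w b \<le> w M + c"
    if add: "\<And>x y. w (x + y) = w x + w y" and "\<forall>x\<in>{cl1, cl2, cl3, cl_centre}. w x \<le> c"
    for w :: "(nat \<Rightarrow>\<^sub>0 nat) \<Rightarrow> int" and c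
    by (rule half[where w = w, OF add]) (use that in \<open>auto simp: add\<close>)
  have add_L: "L (x + y) j = L x j + L y j" for x y j
    by (simp add: L_def lookup_add)
  have sum: "L a j + L b j = L M j + L cl_centre j" for j
    using add_L[of a b j] add_L[of M cl_centre j] ab by simp
  show "Poly_Mapping.lookup a i = Poly_Mapping.lookup b i"
  proof (cases "i \<in> {1, 2, 3}")
    case False
    have "2 * L a i \<le> L M i + 0 \<and> 2 * L b i \<le> L M i + 0"
      by (rule bound) (use False in \<open>auto simp: L_def lookup_add lookup_cl\<close>)
    with sum[of i] False show ?thesis
      by (simp add: L_def lookup_cl)
  next
    case True
    obtain s1 s2 s3 where s: "L M 1 = 2 * s1" "L M 2 = 2 * s2" "L M 3 = 2 * s3"
      using even by (auto simp: L_def elim!: evenE)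
    have d12: "2 * (L a 1 - L a 2) \<le> (L M 1 - L M 2) + 2 \<and> 2 * (L b 1 - L b 2) \<le> (L M 1 - L M 2) + 2"
      by (rule bound) (auto simp: L_def lookup_add lookup_cl)
    have d23: "2 * (L a 2 - L a 3) \<le> (L M 2 - L M 3) + 2 \<and> 2 * (L b 2 - L b 3) \<le> (L M 2 - L M 3) + 2"
      by (rule bound) (auto simp: L_def lookup_add lookup_cl)
    have d31: "2 * (L a 3 - L a 1) \<le> (L M 3 - L M 1) + 2 \<and> 2 * (L b 3 - L b 1) \<le> (L M 3 - L M 1) + 2"
      by (rule bound) (auto simp: L_def lookup_add lookup_cl)
    have tot: "2 * (L a 1 + L a 2 + L a 3) \<le> (L M 1 + L M 2 + L M 3) + 6 \<and>
        2 * (L b 1 + L b 2 + L b 3) \<le> (L M 1 + L M 2 + L M 3) + 6"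
      by (rule bound) (auto simp: L_def lookup_add lookup_cl)
    have "L b j = L M j + 2 - L a j" if "j \<in> {1, 2, 3}" for j
      using sum[of j] that by (simp add: L_def lookup_cl)
    then have "L a 1 - s1 = 1 \<and> L a 2 - s2 = 1 \<and> L a 3 - s3 = 1"
      using d12 d23 d31 tot s by (intro int_triangle_centre) (simp_all add: abs_le_iff)
    with True sum[of i] s show ?thesis
      by (auto simp: L_def lookup_cl)
  qed
qed

lemma monomial_times_choi_lam_not_sos:
  assumes even: "even (Poly_Mapping.lookup M 1)" "even (Poly_Mapping.lookup M 2)"
      "even (Poly_Mapping.lookup M 3)"
    and "c > 0"
  shows "Poly_Mapping.single M c * choi_lam \<noteq> sum_list (map (\<lambda>g. g^2) gs)"
proof
  let ?G = "sum_list (map (\<lambda>g. g^2) gs)"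
  assume sos: "Poly_Mapping.single M c * choi_lam = ?G"
  have keys: "\<exists>x\<in>{cl1, cl2, cl3, cl_centre}. s = M + x" if "s \<in> Poly_Mapping.keys ?G" for s
    using that keys_single_mult[of M c choi_lam] keys_choi_lam unfolding sos[symmetric] by blast
  have "\<forall>g\<in>set gs. \<forall>a\<in>Poly_Mapping.keys g. \<forall>b\<in>Poly_Mapping.keys g. a + b = M + cl_centre \<longrightarrow> a = b"
  proof (intro ballI impI)
    fix g a b
    assume g: "g \<in> set gs" and ab: "a \<in> Poly_Mapping.keys g" "b \<in> Poly_Mapping.keys g" "a + b = M + cl_centre"
    show "a = b"
    proof (rule choi_lam_centre_split[OF even ab(3)])
      fix w :: "(nat \<Rightarrow>\<^sub>0 nat) \<Rightarrow> int" and T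
      assume add: "\<And>x y. w (x + y) = w x + w y" and "\<forall>x\<in>{cl1, cl2, cl3, cl_centre}. w (M + x) \<le> T"
      with keys have "\<forall>s\<in>Poly_Mapping.keys ?G. w s \<le> T"
        by fastforce
      with g ab show "2 * w a \<le> T \<and> 2 * w b \<le> T"
        using sum_squares_keys_weight_bound[where w = w, OF add] by blast
    qed
  qed
  then have "0 \<le> Poly_Mapping.lookup ?G (M + cl_centre)"
    by (rule lookup_sum_squares_nonneg)
  with \<open>c > 0\<close> show False
    unfolding sos[symmetric] lookup_single_mult lookup_choi_lam_centre by simp
qed

definition squares_exp :: "nat \<Rightarrow> nat \<Rightarrow>\<^sub>0 nat" where
  "squares_exp k = (\<Sum>i<k. Poly_Mapping.single i 2)"

lemma lookup_squares_exp: "Poly_Mapping.lookup (squares_exp k) i = (if i < k then 2 else 0)"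
  by (simp add: squares_exp_def lookup_sum lookup_single when_def)

lemma mdeg_squares_exp: "mdeg (squares_exp k) = 2 * k"
  by (induct k) (simp_all add: squares_exp_def mdeg_add)

lemma monom_val_squares_exp: "monom_val (squares_exp k) x = (\<Prod>i<k. x i ^ 2)"
  by (induct k) (simp_all add: squares_exp_def monom_val_add)

lemma prod_mvar_power2: "(\<Prod>i<k. mvar i ^ 2) = Poly_Mapping.single (squares_exp k) 1"
proof (induct k)
  case (Suc k)
  have "Poly_Mapping.single k (1::nat) + Poly_Mapping.single k 1 = Poly_Mapping.single k 2"
    by (metis one_add_one single_add)
  then have "mvar k ^ 2 = Poly_Mapping.single (Poly_Mapping.single k 2) 1"
    by (simp add: mvar_def power2_eq_square mult_single)
  with Suc show ?case
    by (simp add: squares_exp_def mult_single)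
qed (simp add: squares_exp_def)

definition example_poly :: "nat \<Rightarrow> mpoly" where
  "example_poly k = Poly_Mapping.single (squares_exp k) 1 * choi_lam"

lemma keys_example_poly:
  assumes k: "k \<ge> 4" and s: "s \<in> Poly_Mapping.keys (example_poly k)"
  shows "Poly_Mapping.keys s \<subseteq> {..<k}" "mdeg s = 2 * k + 6" "even (Poly_Mapping.lookup s i)"
    "Poly_Mapping.lookup s 0 = 2"
proof -
  obtain x where x: "x \<in> {cl1, cl2, cl3, cl_centre}" and sx: "s = squares_exp k + x"
    using s keys_single_mult[of "squares_exp k" 1 choi_lam] keys_choi_lam
    unfolding example_poly_def by blast
  have "Poly_Mapping.lookup x j = 0" if "j \<notin> {1, 2, 3}" for j
    using cl_exponents(1)[OF x] that by blast
  with k show "Poly_Mapping.keys s \<subseteq> {..<k}" "Poly_Mapping.lookup s 0 = 2"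
    by (auto simp: sx in_keys_iff lookup_add lookup_squares_exp split: if_splits)
  show "mdeg s = 2 * k + 6" "even (Poly_Mapping.lookup s i)"
    using cl_exponents[OF x] by (simp_all add: sx mdeg_add mdeg_squares_exp lookup_add lookup_squares_exp)
qed

lemma meval_example_poly: "meval (example_poly k) x = (\<Prod>i<k. x i ^ 2) *
   ((x 1 ^ 2)^2 * x 2 ^ 2 + (x 2 ^ 2)^2 * x 3 ^ 2 + (x 3 ^ 2)^2 * x 1 ^ 2 - 3 * x 1 ^ 2 * x 2 ^ 2 * x 3 ^ 2)"
  by (simp add: example_poly_def choi_lam_def mult_single meval_add meval_single
      monom_val_add monom_val_squares_exp cl1_def cl2_def cl3_def cl_centre_def algebra_simps
      power_mult[symmetric])

lemma Pk_example_poly: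
  assumes "k \<ge> 4"
  shows "Pk k (example_poly k)"
  unfolding Pk_def in_vars_def homogeneous_def
proof (intro conjI allI)
  show "\<forall>m\<in>Poly_Mapping.keys (example_poly k). Poly_Mapping.keys m \<subseteq> {..<k}"
    "\<exists>d. \<forall>m\<in>Poly_Mapping.keys (example_poly k). mdeg m = d"
    using keys_example_poly[OF assms] by blast+
  fix x :: "nat \<Rightarrow> real"
  have "0 \<le> (\<Prod>i<k. x i ^ 2)"
    by (intro prod_nonneg) auto
  moreover have "0 \<le> (x 1 ^ 2)^2 * x 2 ^ 2 + (x 2 ^ 2)^2 * x 3 ^ 2 + (x 3 ^ 2)^2 * x 1 ^ 2 -
      3 * x 1 ^ 2 * x 2 ^ 2 * x 3 ^ 2"
    by (rule choi_lam_ineq) auto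
  ultimately show "0 \<le> meval (example_poly k) x"
    unfolding meval_example_poly by simp
qed

lemma even_poly_example_poly: "k \<ge> 4 \<Longrightarrow> even_poly (example_poly k)"
  unfolding even_poly_def using keys_example_poly by blast

lemma x0_power_times_example_poly_not_sos:
  assumes "k \<ge> 4" "c > 0"
  shows "Poly_Mapping.single (Poly_Mapping.single 0 A) c * example_poly k \<noteq> sum_list (map (\<lambda>g. g^2) gs)"
proof -
  let ?M = "Poly_Mapping.single 0 A + squares_exp k"
  have "Poly_Mapping.single (Poly_Mapping.single 0 A) c * example_poly k = Poly_Mapping.single ?M c * choi_lam"
    by (simp add: example_poly_def mult_single mult.assoc[symmetric])
  moreover have "Poly_Mapping.lookup ?M j = 2" if "j \<in> {1, 2, 3}" for j
    using that assms(1) by (auto simp: lookup_add lookup_single lookup_squares_exp)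
  ultimately show ?thesis
    using monomial_times_choi_lam_not_sos[of ?M c gs] assms(2) by simp
qed

theorem lemma3p3:
  fixes k :: nat
  assumes "k \<ge> 4"
  shows "\<exists>p. even_poly p \<and> Deltak k p \<and>
           (\<exists>r. in_vars k r \<and> p = (\<Prod>i<k. mvar i ^ 2) * r) \<and>
           bad_point k p (\<lambda>i. if i = 0 then 1 else 0)"
proof -
  have vanishes: "meval q (\<lambda>i. if i = 0 then 1 else 0) = 0" if "Sigmak k (q^2 * example_poly k)" for q
  proof -
    from that obtain hs where "q^2 * example_poly k = sum_list (map (\<lambda>h. h^2) hs)"
      by (auto simp: Sigmak_def)
    with keys_example_poly[OF assms] x0_power_times_example_poly_not_sos[OF assms] show ?thesis
      by (intro sos_multiple_vanishes_at_e0[where e = 2 and d = "2 * k + 6"]) auto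
  qed
  have "\<not> Sigmak k (example_poly k)"
    using vanishes[of 1] by auto
  show ?thesis
  proof (intro exI conjI)
    show "even_poly (example_poly k)" "in_vars k choi_lam"
      using assms by (rule even_poly_example_poly, rule in_vars_choi_lam)
    show "Deltak k (example_poly k)"
      unfolding Deltak_def using Pk_example_poly[OF assms] \<open>\<not> Sigmak k (example_poly k)\<close> by blast
    show "example_poly k = (\<Prod>i<k. mvar i ^ 2) * choi_lam"
      by (simp add: example_poly_def prod_mvar_power2)
    show "bad_point k (example_poly k) (\<lambda>i. if i = 0 then 1 else 0)"
      unfolding bad_point_def using Pk_example_poly[OF assms] vanishes by blast
  qed
qed

end
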